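(* Let $k\in\mathbb Z$ and let $(p_l)_{l\le k}$ be a probability distribution on $\{l\in\mathbb Z:l\le k\}$ with $p_k\in(0,1)$, $p_kp_{k-1}>0$, and $\sum_{l\le k}|l|p_l<\infty$. Let $r_i=\sum_{j\le k-i}p_j$ for $i\ge1$. Then, as $N\to\infty$, $$\sum_{i=2}^\infty\Big(\frac{r_i}{r_1}\Big)^N=O\Big(\Big(\frac{r_2}{r_1}\Big)^N\Big).$$ *)

theory Defs
  imports "HOL-Analysis.Analysis" "HOL-Library.Landau_Symbols"
begin

definition tail_r :: "(int \<Rightarrow> real) \<Rightarrow> int \<Rightarrow> nat \<Rightarrow> real" where
  "tail_r p k i = (\<Sum>\<^sub>\<infinity>j\<in>{..k - int i}. p j)"

end

theory Submission
  imports Defs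
begin

text \<open>
  The tails \<open>r\<^sub>i\<close> decrease in \<open>i\<close>, and the first moment gives the Markov bound
  \<open>i r\<^sub>i \<le> \<Sum>\<^bsub>l\<le>k\<^esub> (k - l) p\<^sub>l\<close>, so \<open>\<Sum>\<^sub>i r\<^sub>i\<^sup>2 < \<infinity>\<close>. Hence with \<open>q\<^sub>i = r\<^sub>i / r\<^sub>1\<close> we have
  \<open>q\<^sub>i\<^sup>N \<le> q\<^sub>2\<^sup>N\<^sup>-\<^sup>2 q\<^sub>i\<^sup>2\<close> for \<open>i \<ge> 2\<close>, and summing gives \<open>\<Sum>\<^sub>i\<^sub>\<ge>\<^sub>2 q\<^sub>i\<^sup>N \<le> C q\<^sub>2\<^sup>N\<^sup>-\<^sup>2\<close>.
\<close>

lemma infsum_powers_bigo: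
  fixes a :: "'a \<Rightarrow> real"
  assumes nonneg: "\<And>i. i \<in> A \<Longrightarrow> 0 \<le> a i"
    and bounded: "\<And>i. i \<in> A \<Longrightarrow> a i \<le> c"
    and summable: "(\<lambda>i. a i ^ e) summable_on A"
  shows "(\<lambda>N. \<Sum>\<^sub>\<infinity>i\<in>A. a i ^ N) \<in> O(\<lambda>N. c ^ N)"
proof (cases "c > 0")
  case True
  define S where "S = (\<Sum>\<^sub>\<infinity>i\<in>A. a i ^ e)"
  have "\<forall>\<^sub>F N in at_top. norm (\<Sum>\<^sub>\<infinity>i\<in>A. a i ^ N) \<le> S / c ^ e * norm (c ^ N)"
    using eventually_ge_at_top[of e]
  proof eventually_elim
    case (elim N)
    have split: "x ^ N = x ^ (N - e) * x ^ e" for x :: real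
      using elim by (simp flip: power_add)
    have dominated: "a i ^ N \<le> c ^ (N - e) * a i ^ e" if "i \<in> A" for i
      unfolding split[of "a i"] using that nonneg bounded
      by (intro mult_right_mono power_mono) auto
    have summable': "(\<lambda>i. c ^ (N - e) * a i ^ e) summable_on A"
      using summable by (rule summable_on_cmult_right)
    have "(\<Sum>\<^sub>\<infinity>i\<in>A. a i ^ N) \<le> (\<Sum>\<^sub>\<infinity>i\<in>A. c ^ (N - e) * a i ^ e)"
      by (rule infsum_mono[OF summable_on_comparison_test[OF summable'] summable'])
         (use dominated nonneg in auto)
    also have "\<dots> = c ^ (N - e) * S"
      unfolding S_def by (rule infsum_cmult_right')
    also have "\<dots> = S / c ^ e * c ^ N"
      unfolding split[of c] using True by simp
    finally show ?case
      using True nonneg by (simp add: infsum_nonneg)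
  qed
  then show ?thesis by (rule bigoI)
next
  case False
  have zero: "a i = 0" if "i \<in> A" for i
    using that nonneg bounded False by force
  have "\<forall>\<^sub>F N in at_top. (\<Sum>\<^sub>\<infinity>i\<in>A. a i ^ N) = 0"
    using eventually_ge_at_top[of 1] by eventually_elim (auto intro!: infsum_0 simp: zero)
  then have "\<forall>\<^sub>F N in at_top. norm (\<Sum>\<^sub>\<infinity>i\<in>A. a i ^ N) \<le> 0 * norm (c ^ N)"
    by eventually_elim simp
  then show ?thesis by (rule bigoI)
qed

lemma tail_r_nonneg:
  assumes "\<And>l. l \<le> k \<Longrightarrow> p l \<ge> 0"
  shows "tail_r p k i \<ge> 0"
  unfolding tail_r_def using assms by (intro infsum_nonneg) auto

lemma tail_r_antimono:
  assumes "\<And>l. l \<le> k \<Longrightarrow> p l \<ge> 0" and "p summable_on {..k}" and "i \<le> j"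
  shows "tail_r p k j \<le> tail_r p k i"
  unfolding tail_r_def using assms
  by (intro infsum_mono2 summable_on_subset_banach[OF assms(2)]) auto

lemma summable_on_distance_moment:
  assumes nonneg: "\<And>l. l \<le> k \<Longrightarrow> p l \<ge> 0" and "p summable_on {..k}"
    and moment: "(\<lambda>l. \<bar>real_of_int l\<bar> * p l) summable_on {..k}"
  shows "(\<lambda>l. real_of_int (k - l) * p l) summable_on {..k}"
proof -
  have "(\<lambda>l. norm (real_of_int l * p l)) summable_on {..k}"
    using moment by (rule summable_on_cong[THEN iffD1, rotated]) (auto simp: abs_mult nonneg)
  then have "(\<lambda>l. real_of_int l * p l) summable_on {..k}"
    by (rule abs_summable_summable)
  then have "(\<lambda>l. real_of_int k * p l + - (real_of_int l * p l)) summable_on {..k}"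
    using assms(2) by (intro summable_on_add summable_on_uminus[THEN iffD2] summable_on_cmult_right)
  then show ?thesis by (simp add: left_diff_distrib)
qed

lemma tail_r_Markov:
  assumes nonneg: "\<And>l. l \<le> k \<Longrightarrow> p l \<ge> 0" and "p summable_on {..k}"
    and moment: "(\<lambda>l. real_of_int (k - l) * p l) summable_on {..k}"
  shows "real i * tail_r p k i \<le> (\<Sum>\<^sub>\<infinity>l\<in>{..k}. real_of_int (k - l) * p l)"
proof -
  have tail: "p summable_on {..k - int i}"
    using assms(2) by (rule summable_on_subset_banach) auto
  have "real i * tail_r p k i = (\<Sum>\<^sub>\<infinity>l\<in>{..k - int i}. real i * p l)"
    unfolding tail_r_def by (simp add: infsum_cmult_right')
  also have "\<dots> \<le> (\<Sum>\<^sub>\<infinity>l\<in>{..k - int i}. real_of_int (k - l) * p l)"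
    using nonneg
    by (intro infsum_mono summable_on_cmult_right[OF tail]
          summable_on_subset_banach[OF moment] mult_right_mono) auto
  also have "\<dots> \<le> (\<Sum>\<^sub>\<infinity>l\<in>{..k}. real_of_int (k - l) * p l)"
    using nonneg
    by (intro infsum_mono2 summable_on_subset_banach[OF moment] moment) auto
  finally show ?thesis .
qed

lemma tail_r_power2_summable:
  assumes nonneg: "\<And>l. l \<le> k \<Longrightarrow> p l \<ge> 0" and "p summable_on {..k}"
    and moment: "(\<lambda>l. real_of_int (k - l) * p l) summable_on {..k}"
  shows "(\<lambda>i. tail_r p k i ^ 2) summable_on {1..}"
proof -
  define M where "M = (\<Sum>\<^sub>\<infinity>l\<in>{..k}. real_of_int (k - l) * p l)"
  have "summable (\<lambda>i. M\<^sup>2 * inverse (real i ^ 2))"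
    by (intro summable_mult inverse_power_summable) auto
  then have "(\<lambda>i. M\<^sup>2 * inverse (real i ^ 2)) summable_on UNIV"
    by (subst summable_on_UNIV_nonneg_real_iff) auto
  then have "(\<lambda>i. M\<^sup>2 * inverse (real i ^ 2)) summable_on {1..}"
    by (rule summable_on_subset_banach) simp
  moreover have "tail_r p k i ^ 2 \<le> M\<^sup>2 * inverse (real i ^ 2)" if "i \<ge> 1" for i
  proof -
    have "tail_r p k i \<le> M / real i"
      using tail_r_Markov[OF assms, of i] that by (simp add: M_def field_simps)
    then have "tail_r p k i ^ 2 \<le> (M / real i) ^ 2"
      using tail_r_nonneg[OF nonneg] by (intro power_mono) auto
    then show ?thesis by (simp add: divide_inverse power_mult_distrib power_inverse)
  qed
  ultimately show ?thesis
    by (rule summable_on_comparison_test) (auto simp: tail_r_nonneg[OF nonneg])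
qed

theorem lemma6p3:
  fixes k :: int and p :: "int \<Rightarrow> real"
  assumes nonneg: "\<And>l. l \<le> k \<Longrightarrow> p l \<ge> 0"
    and prob: "(p has_sum 1) {..k}"
    and pk: "0 < p k" "p k < 1"
    and pkm1: "p k * p (k - 1) > 0"
    and moment: "(\<lambda>l. \<bar>real_of_int l\<bar> * p l) summable_on {..k}"
  shows "(\<lambda>N::nat. \<Sum>\<^sub>\<infinity>i\<in>{2::nat..}. (tail_r p k i / tail_r p k 1) ^ N)
           \<in> O(\<lambda>N. (tail_r p k 2 / tail_r p k 1) ^ N)"
proof (rule infsum_powers_bigo)
  have summable: "p summable_on {..k}"
    using prob by (auto simp: summable_on_def)
  note distance_moment = summable_on_distance_moment[OF nonneg summable moment]
  have "(\<lambda>i. tail_r p k i ^ 2) summable_on {2..}"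
    using tail_r_power2_summable[OF nonneg summable distance_moment]
    by (rule summable_on_subset_banach) auto
  then show "(\<lambda>i. (tail_r p k i / tail_r p k 1) ^ 2) summable_on {2..}"
    unfolding divide_inverse power_mult_distrib by (rule summable_on_cmult_left)
  show "0 \<le> tail_r p k i / tail_r p k 1" for i
    using tail_r_nonneg[OF nonneg] by simp
  show "tail_r p k i / tail_r p k 1 \<le> tail_r p k 2 / tail_r p k 1" if "i \<in> {2..}" for i
    using that tail_r_antimono[OF nonneg summable] tail_r_nonneg[OF nonneg]
    by (intro divide_right_mono) auto
qed

end
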